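(* In the setting described in the context, the probability $\Pr(y)=|\phi_k(y)|^2$ of observing $y\in\{0,1,\dots,N-1\}$ after the Amplified-QFT is given exactly by: (A) if $y=0$: $\Pr(y)=\cos^2(2k\theta)$; (B) if $Py\equiv 0 \pmod N$ and $y\neq 0$: $\Pr(y)=\tan^2\theta\,\sin^2(2k\theta)$; (C) if $Py\not\equiv 0\pmod N$ and $MPy\not\equiv 0 \pmod N$: $\Pr(y)=\dfrac{1}{M^2}\tan^2\theta\,\sin^2(2k\theta)\,\dfrac{\sin^2(\pi MPy/N)}{\sin^2(\pi Py/N)}$; (D) if $Py\not\equiv 0\pmod N$ and $MPy\equiv 0\pmod N$: $\Pr(y)=0$.
   Context: Setting: $N\ge 2$ is an integer, $\mathcal L=\{0,1,\dots,N-1\}$, and $s\ge 0$, $P\ge 1$, $M\ge 1$ are integers with $M<N$ and $s+(M-1)P\le N-1$; $A=\{s+rP: r=0,1,\dots,M-1\}\subset\mathcal L$ (so $|A|=M$). Let $\omega=e^{-2\pi i/N}$. Let $\theta\in(0,\pi/2)$ be defined by $\sin\theta=\sqrt{M/N}$ (so $\cos\theta=\sqrt{1-M/N}$), and $k=\lfloor \pi/(4\theta)\rfloor$. Put $a_k=\frac{1}{\sqrt M}\sin((2k+1)\theta)$, $b_k=\frac{1}{\sqrt{N-M}}\cos((2k+1)\theta)$, and let $\psi_k\in\mathbb C^N$ be the state with $\psi_k(z)=a_k$ for $z\in A$ and $\psi_k(z)=b_k$ for $z\notin A$ (this is the state produced by $k$ Grover iterations for the marked set $A$). The quantum Fourier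 transform is applied: $\phi_k(y)=\frac{1}{\sqrt N}\sum_{z=0}^{N-1}\psi_k(z)\omega^{zy}$, and $\Pr(y)=|\phi_k(y)|^2$. *)

theory Defs
  imports "HOL-Analysis.Analysis"
begin

definition grover_theta :: "nat \<Rightarrow> nat \<Rightarrow> real" where
  "grover_theta N M = arcsin (sqrt (real M / real N))"

definition grover_k :: "nat \<Rightarrow> nat \<Rightarrow> nat" where
  "grover_k N M = nat \<lfloor>pi / (4 * grover_theta N M)\<rfloor>"

definition marked_set :: "nat \<Rightarrow> nat \<Rightarrow> nat \<Rightarrow> nat set" where
  "marked_set s P M = {s + r * P | r. r < M}"

definition grover_state :: "nat \<Rightarrow> nat \<Rightarrow> nat \<Rightarrow> nat \<Rightarrow> nat \<Rightarrow> complex" where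
  "grover_state N s P M z =
     (let \<theta> = grover_theta N M; k = grover_k N M in
      if z \<in> marked_set s P M
      then complex_of_real (sin ((2 * real k + 1) * \<theta>) / sqrt (real M))
      else complex_of_real (cos ((2 * real k + 1) * \<theta>) / sqrt (real N - real M)))"

definition qft_omega :: "nat \<Rightarrow> complex" where
  "qft_omega N = cis (- 2 * pi / real N)"

definition amplified_qft :: "nat \<Rightarrow> nat \<Rightarrow> nat \<Rightarrow> nat \<Rightarrow> nat \<Rightarrow> complex" where
  "amplified_qft N s P M y =
     (1 / complex_of_real (sqrt (real N))) *
       (\<Sum>z<N. grover_state N s P M z * qft_omega N ^ (z * y))"

definition aqft_prob :: "nat \<Rightarrow> nat \<Rightarrow> nat \<Rightarrow> nat \<Rightarrow> nat \<Rightarrow> real" where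
  "aqft_prob N s P M y = (cmod (amplified_qft N s P M y))\<^sup>2"

end

theory Submission
  imports Defs
begin

(* Write a = a_k and b = b_k for the two Grover amplitudes.  The state is
   psi = b + (a - b) 1_A, so its Fourier transform splits into
     sqrt N * phi(y) = b * (full character sum over Z_N) + (a - b) * (character sum over A).
   The full character sum is N for y = 0 and 0 otherwise; since A = {s + rP : r < M} is an
   arithmetic progression, the sum over A is omega^(sy) times a geometric sum with ratio
   omega^(Py) = cis x, x = -2 pi P y / N, whose squared modulus is M^2 if cis x = 1 and the
   Fejer-type quotient sin^2 (M x/2) / sin^2 (x/2) otherwise.  Hence
     Pr(0) = (b N + (a - b) M)^2 / N      and      Pr(y) = (a - b)^2 / N * |geometric sum|^2.
   Finally, sin theta = sqrt (M/N) turns the amplitude combinations into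
     (b N + (a - b) M) / sqrt N = cos (2 k theta),   (a - b)^2 / N = tan^2 theta sin^2 (2 k theta) / M^2,
   The four cases of the theorem follow: cis x = 1 exactly when N divides P y, and
   sin (pi M P y / N) vanishes when N divides M P y. *)

lemma qft_omega_pow: "qft_omega N ^ n = cis (- 2 * pi * real n / real N)"
proof -
  have "qft_omega N ^ n = cis (real n * (- 2 * pi / real N))"
    unfolding qft_omega_def Complex.DeMoivre ..
  also have "real n * (- 2 * pi / real N) = - 2 * pi * real n / real N" by simp
  finally show ?thesis .
qed

lemma qft_omega_pow_eq_1_iff:
  assumes "N > 0"
  shows "qft_omega N ^ n = 1 \<longleftrightarrow> n mod N = 0"
proof
  assume "qft_omega N ^ n = 1"
  hence "cos (- 2 * pi * real n / real N) = 1"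
    unfolding qft_omega_pow by (metis Re_complex_of_real cis.sel(1) of_real_1)
  then obtain j :: int where "- 2 * pi * real n / real N = real_of_int j * 2 * pi"
    using cos_one_2pi_int by blast
  hence "pi * (real n + real_of_int j * real N) = 0"
    using assms by (simp add: field_simps)
  hence "real_of_int (int n) = real_of_int (- j * int N)" by simp
  hence "int n = - j * int N" by (rule of_int_eq_iff[THEN iffD1])
  hence "int N dvd int n" by simp
  thus "n mod N = 0" by presburger
next
  assume "n mod N = 0"
  then obtain q where q: "n = N * q" by blast
  have "qft_omega N ^ n = cis (2 * pi * real_of_int (- int q))"
    unfolding qft_omega_pow q using assms by (simp add: field_simps)
  also have "\<dots> = 1" by (rule cis_multiple_2pi) simp
  finally show "qft_omega N ^ n = 1" .
qed

lemma qft_character_sum: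
  assumes "N > 0"
  shows "(\<Sum>z<N. qft_omega N ^ (z * y)) = (if y mod N = 0 then of_nat N else 0)"
proof (cases "y mod N = 0")
  case True
  hence "qft_omega N ^ (z * y) = 1" for z
    by (simp add: qft_omega_pow_eq_1_iff[OF assms] mod_eq_0_iff_dvd dvd_mult)
  thus ?thesis using True by simp
next
  case False
  let ?w = "qft_omega N ^ y"
  have "?w \<noteq> 1" using qft_omega_pow_eq_1_iff[OF assms] False by simp
  moreover have "?w ^ N = 1"
    using qft_omega_pow_eq_1_iff[OF assms, of "y * N"] by (simp add: power_mult[symmetric])
  ultimately have "(\<Sum>z<N. ?w ^ z) = 0" using sum_gp_strict[of ?w N] by simp
  thus ?thesis using False by (simp add: power_mult[symmetric] mult.commute)
qed

lemma norm_one_minus_cis_sq: "(cmod (1 - cis x))\<^sup>2 = 4 * (sin (x / 2))\<^sup>2"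
proof -
  have "(cmod (1 - cis x))\<^sup>2 = (1 - cos x)\<^sup>2 + (sin x)\<^sup>2" by (simp add: cmod_power2)
  also have "\<dots> = 2 - 2 * cos x" by (simp add: power2_eq_square algebra_simps sin_squared_eq)
  also have "cos x = 1 - 2 * (sin (x / 2))\<^sup>2" using cos_double_sin[of "x / 2"] by simp
  finally show ?thesis by simp
qed

lemma norm_geometric_cis_sq:
  "(cmod (\<Sum>r<M. cis x ^ r))\<^sup>2 =
    (if cis x = 1 then (real M)\<^sup>2 else (sin (real M * x / 2))\<^sup>2 / (sin (x / 2))\<^sup>2)"
proof (cases "cis x = 1")
  case False
  have "(\<Sum>r<M. cis x ^ r) = (1 - cis (real M * x)) / (1 - cis x)"
    using sum_gp_strict[of "cis x" M] False by (simp add: Complex.DeMoivre)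
  hence "(cmod (\<Sum>r<M. cis x ^ r))\<^sup>2 = (cmod (1 - cis (real M * x)))\<^sup>2 / (cmod (1 - cis x))\<^sup>2"
    by (simp add: norm_divide power_divide)
  thus ?thesis using False by (simp add: norm_one_minus_cis_sq)
qed simp

lemma sin_pi_multiple_div:
  assumes "N > 0" "n mod N = 0"
  shows "sin (pi * real n / real N) = 0"
proof -
  obtain q where "n = N * q" using assms(2) by blast
  hence "pi * real n / real N = real q * pi" using assms(1) by simp
  thus ?thesis by (simp add: sin_npi)
qed

definition marked_amp :: "nat \<Rightarrow> nat \<Rightarrow> real" where
  "marked_amp N M = sin ((2 * real (grover_k N M) + 1) * grover_theta N M) / sqrt (real M)"

definition unmarked_amp :: "nat \<Rightarrow> nat \<Rightarrow> real" where
  "unmarked_amp N M = cos ((2 * real (grover_k N M) + 1) * grover_theta N M) / sqrt (real N - real M)"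

lemma grover_state_eq:
  "grover_state N s P M z =
     complex_of_real (if z \<in> marked_set s P M then marked_amp N M else unmarked_amp N M)"
  unfolding grover_state_def marked_amp_def unmarked_amp_def Let_def by simp

lemma grover_theta_sin_cos:
  assumes "M \<le> N" "N > 0"
  shows "sin (grover_theta N M) = sqrt (real M / real N)"
    and "cos (grover_theta N M) = sqrt ((real N - real M) / real N)"
proof -
  have ratio: "0 \<le> real M / real N" "real M / real N \<le> 1" using assms by auto
  hence bounds: "-1 \<le> sqrt (real M / real N)" "sqrt (real M / real N) \<le> 1"
    by (simp_all add: order_trans[of "-1" 0])
  show "sin (grover_theta N M) = sqrt (real M / real N)"
    unfolding grover_theta_def using bounds by (intro sin_arcsin)
  have "cos (grover_theta N M) = sqrt (1 - (sqrt (real M / real N))\<^sup>2)"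
    unfolding grover_theta_def using bounds by (intro cos_arcsin)
  also have "\<dots> = sqrt ((real N - real M) / real N)"
    using ratio assms by (simp add: diff_divide_distrib)
  finally show "cos (grover_theta N M) = sqrt ((real N - real M) / real N)" .
qed

lemma grover_amplitude_identities:
  fixes m n t :: real and k :: nat
  assumes mn: "0 < m" "m < n"
    and st: "sin t = sqrt (m / n)" and ct: "cos t = sqrt ((n - m) / n)"
  defines "a \<equiv> sin ((2 * real k + 1) * t) / sqrt m"
    and "b \<equiv> cos ((2 * real k + 1) * t) / sqrt (n - m)"
  shows "(b * n + (a - b) * m) / sqrt n = cos (2 * real k * t)"
    and "(a - b)\<^sup>2 / n = (tan t)\<^sup>2 * (sin (2 * real k * t))\<^sup>2 / m\<^sup>2"
proof -
  define \<alpha> where "\<alpha> = (2 * real k + 1) * t"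
  have sn: "sqrt n > 0" using mn by simp
  have sin_pos: "sin t > 0" and cos_pos: "cos t > 0" using st ct mn by simp_all
  have sm: "sqrt m = sqrt n * sin t" and snm: "sqrt (n - m) = sqrt n * cos t"
    using st ct mn by (simp_all add: real_sqrt_divide)
  have shift: "\<alpha> - t = 2 * real k * t" unfolding \<alpha>_def by (simp add: algebra_simps)
  have "a * m = sin \<alpha> * sqrt m" and "b * (n - m) = cos \<alpha> * sqrt (n - m)"
    unfolding a_def b_def \<alpha>_def[symmetric] using mn
    by (simp_all add: field_simps flip: real_sqrt_mult)
  hence "b * n + (a - b) * m = sqrt n * (sin \<alpha> * sin t + cos \<alpha> * cos t)"
    using sm snm by (simp add: algebra_simps)
  also have "sin \<alpha> * sin t + cos \<alpha> * cos t = cos (2 * real k * t)"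
    using cos_diff[of \<alpha> t] shift by simp
  finally show "(b * n + (a - b) * m) / sqrt n = cos (2 * real k * t)" using sn by simp
  have "a - b = (sin \<alpha> * cos t - cos \<alpha> * sin t) / (sqrt n * sin t * cos t)"
    unfolding a_def b_def \<alpha>_def[symmetric] sm snm using sn sin_pos cos_pos
    by (simp add: field_simps)
  also have "sin \<alpha> * cos t - cos \<alpha> * sin t = sin (2 * real k * t)"
    using sin_diff[of \<alpha> t] shift by simp
  finally have diff: "a - b = sin (2 * real k * t) / (sqrt n * sin t * cos t)" .
  have "m = n * (sin t)\<^sup>2" using st mn by simp
  thus "(a - b)\<^sup>2 / n = (tan t)\<^sup>2 * (sin (2 * real k * t))\<^sup>2 / m\<^sup>2"
    unfolding diff tan_def using sn sin_pos cos_pos mn by (simp add: field_simps power2_eq_square)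
qed

lemma grover_amplitude_combinations:
  assumes "0 < M" "M < N"
  shows "(unmarked_amp N M * real N + (marked_amp N M - unmarked_amp N M) * real M) / sqrt (real N)
           = cos (2 * real (grover_k N M) * grover_theta N M)"
    and "(marked_amp N M - unmarked_amp N M)\<^sup>2 / real N
           = (tan (grover_theta N M))\<^sup>2 * (sin (2 * real (grover_k N M) * grover_theta N M))\<^sup>2
             / (real M)\<^sup>2"
proof -
  have "0 < real M" "real M < real N" "M \<le> N" "N > 0" using assms by auto
  note identities = grover_amplitude_identities[OF this(1,2) grover_theta_sin_cos[OF this(3,4)]]
  show "(unmarked_amp N M * real N + (marked_amp N M - unmarked_amp N M) * real M) / sqrt (real N)
           = cos (2 * real (grover_k N M) * grover_theta N M)"
    unfolding marked_amp_def unmarked_amp_def by (rule identities(1))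
  show "(marked_amp N M - unmarked_amp N M)\<^sup>2 / real N
           = (tan (grover_theta N M))\<^sup>2 * (sin (2 * real (grover_k N M) * grover_theta N M))\<^sup>2
             / (real M)\<^sup>2"
    unfolding marked_amp_def unmarked_amp_def by (rule identities(2))
qed

lemma marked_set_progression:
  assumes "N > 0" "s + (M - 1) * P \<le> N - 1"
  shows "marked_set s P M = (\<lambda>r. s + r * P) ` {..<M}"
    and "marked_set s P M \<subseteq> {..<N}"
proof -
  show image: "marked_set s P M = (\<lambda>r. s + r * P) ` {..<M}"
    unfolding marked_set_def by auto
  have "s + r * P < N" if "r < M" for r
  proof -
    have "r * P \<le> (M - 1) * P" using that by (intro mult_le_mono1) linarith
    thus ?thesis using assms by linarith
  qed
  thus "marked_set s P M \<subseteq> {..<N}" unfolding image by auto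
qed

lemma progression_character_sum:
  fixes w :: "'a :: comm_semiring_1"
  assumes "P \<ge> 1"
  shows "(\<Sum>z\<in>(\<lambda>r. s + r * P) ` {..<M}. w ^ (z * y)) =
           w ^ (s * y) * (\<Sum>r<M. (w ^ (P * y)) ^ r)"
proof -
  have "inj_on (\<lambda>r. s + r * P) {..<M}" using assms by (auto simp: inj_on_def)
  hence "(\<Sum>z\<in>(\<lambda>r. s + r * P) ` {..<M}. w ^ (z * y)) = (\<Sum>r<M. w ^ ((s + r * P) * y))"
    by (simp add: sum.reindex)
  also have "\<dots> = (\<Sum>r<M. w ^ (s * y) * (w ^ (P * y)) ^ r)"
  proof (rule sum.cong)
    fix r
    have "(s + r * P) * y = s * y + (P * y) * r" by (simp add: algebra_simps)
    thus "w ^ ((s + r * P) * y) = w ^ (s * y) * (w ^ (P * y)) ^ r"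
      by (simp only: power_add power_mult)
  qed simp
  finally show ?thesis by (simp add: sum_distrib_left)
qed

text \<open>Splitting psi = b + (a - b) 1_A: the transform is a full character sum plus a
  geometric sum over the marked progression.\<close>
lemma amplified_qft_split:
  assumes "P \<ge> 1" "N > 0" "s + (M - 1) * P \<le> N - 1"
  defines "a \<equiv> complex_of_real (marked_amp N M)" and "b \<equiv> complex_of_real (unmarked_amp N M)"
    and "\<omega> \<equiv> qft_omega N"
  shows "amplified_qft N s P M y =
    (b * (\<Sum>z<N. \<omega> ^ (z * y)) + (a - b) * \<omega> ^ (s * y) * (\<Sum>r<M. (\<omega> ^ (P * y)) ^ r))
      / complex_of_real (sqrt (real N))"
proof -
  let ?A = "marked_set s P M"
  have "(\<Sum>z<N. grover_state N s P M z * \<omega> ^ (z * y)) =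
      (\<Sum>z<N. b * \<omega> ^ (z * y) + (a - b) * (if z \<in> ?A then \<omega> ^ (z * y) else 0))"
    by (rule sum.cong) (auto simp: grover_state_eq a_def b_def algebra_simps)
  also have "\<dots> = b * (\<Sum>z<N. \<omega> ^ (z * y)) + (a - b) * (\<Sum>z\<in>{..<N} \<inter> ?A. \<omega> ^ (z * y))"
    by (simp only: sum.distrib sum_distrib_left[symmetric] sum.inter_restrict[OF finite_lessThan])
  also have "{..<N} \<inter> ?A = (\<lambda>r. s + r * P) ` {..<M}"
    using marked_set_progression[OF assms(2,3)] by auto
  also have "(\<Sum>z\<in>(\<lambda>r. s + r * P) ` {..<M}. \<omega> ^ (z * y)) =
      \<omega> ^ (s * y) * (\<Sum>r<M. (\<omega> ^ (P * y)) ^ r)"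
    by (rule progression_character_sum[OF assms(1)])
  finally show ?thesis unfolding amplified_qft_def \<omega>_def by (simp add: mult.assoc)
qed

lemma aqft_prob_at_zero:
  assumes "P \<ge> 1" "N > 0" "s + (M - 1) * P \<le> N - 1"
  shows "aqft_prob N s P M 0 =
    ((unmarked_amp N M * real N + (marked_amp N M - unmarked_amp N M) * real M) / sqrt (real N))\<^sup>2"
proof -
  have "amplified_qft N s P M 0 = complex_of_real
      ((unmarked_amp N M * real N + (marked_amp N M - unmarked_amp N M) * real M) / sqrt (real N))"
    unfolding amplified_qft_split[OF assms] by simp
  thus ?thesis by (simp only: aqft_prob_def norm_of_real power2_abs)
qed

text \<open>Output probability of 0 < y < N: the full character sum vanishes and the phase
  omega^(sy) has modulus 1, leaving the geometric sum with ratio cis x.\<close>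
lemma aqft_prob_nonzero:
  assumes "P \<ge> 1" "N > 0" "s + (M - 1) * P \<le> N - 1" "0 < y" "y < N"
  shows "aqft_prob N s P M y = (marked_amp N M - unmarked_amp N M)\<^sup>2 / real N
           * (cmod (\<Sum>r<M. cis (- 2 * pi * real (P * y) / real N) ^ r))\<^sup>2"
proof -
  let ?d = "marked_amp N M - unmarked_amp N M"
  let ?G = "\<Sum>r<M. cis (- 2 * pi * real (P * y) / real N) ^ r"
  have "(\<Sum>z<N. qft_omega N ^ (z * y)) = 0"
    using qft_character_sum[OF assms(2)] assms(4,5) by simp
  hence "amplified_qft N s P M y =
      complex_of_real (?d / sqrt (real N)) * qft_omega N ^ (s * y) * ?G"
    unfolding amplified_qft_split[OF assms(1-3)] qft_omega_pow[of N "P * y"] by simp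
  moreover have "cmod (qft_omega N ^ (s * y)) = 1" by (simp add: qft_omega_pow)
  ultimately have "cmod (amplified_qft N s P M y) = \<bar>?d / sqrt (real N)\<bar> * cmod ?G"
    by (simp only: norm_mult norm_of_real mult_1_right)
  thus ?thesis
    unfolding aqft_prob_def using assms(2) by (simp add: power_mult_distrib power_divide)
qed

text \<open>Closed form for 0 < y < N: insert the amplitude identity and the geometric-sum norm;
  the ratio cis x equals 1 exactly when N divides P y.\<close>
lemma aqft_prob_nonzero_closed_form:
  assumes "P \<ge> 1" "N > 0" "s + (M - 1) * P \<le> N - 1" "0 < y" "y < N" "0 < M" "M < N"
  defines "\<theta> \<equiv> grover_theta N M" and "k \<equiv> grover_k N M"
  shows "aqft_prob N s P M y = (tan \<theta>)\<^sup>2 * (sin (2 * real k * \<theta>))\<^sup>2 / (real M)\<^sup>2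
      * (if (P * y) mod N = 0 then (real M)\<^sup>2
         else (sin (pi * real (M * P * y) / real N))\<^sup>2 / (sin (pi * real (P * y) / real N))\<^sup>2)"
proof -
  define x where "x = - 2 * pi * real (P * y) / real N"
  have "cis x = qft_omega N ^ (P * y)" unfolding qft_omega_pow x_def ..
  hence cis_x: "cis x = 1 \<longleftrightarrow> (P * y) mod N = 0" using qft_omega_pow_eq_1_iff[OF assms(2)] by simp
  have half_angles: "real M * x / 2 = - (pi * real (M * P * y) / real N)"
      "x / 2 = - (pi * real (P * y) / real N)" unfolding x_def by simp_all
  have "aqft_prob N s P M y =
      (marked_amp N M - unmarked_amp N M)\<^sup>2 / real N * (cmod (\<Sum>r<M. cis x ^ r))\<^sup>2"
    unfolding x_def using aqft_prob_nonzero[OF assms(1-5)] .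
  thus ?thesis
    unfolding grover_amplitude_combinations(2)[OF assms(6,7), folded \<theta>_def k_def]
      norm_geometric_cis_sq half_angles cis_x by simp
qed

theorem mainTheorem1:
  fixes N s P M y :: nat
  assumes "N \<ge> 2" and "P \<ge> 1" and "M \<ge> 1" and "M < N"
    and "s + (M - 1) * P \<le> N - 1" and "y < N"
  defines "\<theta> \<equiv> grover_theta N M" and "k \<equiv> grover_k N M"
  shows "(y = 0 \<longrightarrow> aqft_prob N s P M y = (cos (2 * real k * \<theta>))\<^sup>2)
    \<and> ((P * y) mod N = 0 \<and> y \<noteq> 0 \<longrightarrow>
         aqft_prob N s P M y = (tan \<theta>)\<^sup>2 * (sin (2 * real k * \<theta>))\<^sup>2)
    \<and> ((P * y) mod N \<noteq> 0 \<and> (M * P * y) mod N \<noteq> 0 \<longrightarrow>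
         aqft_prob N s P M y = 1 / (real M)\<^sup>2 * (tan \<theta>)\<^sup>2 * (sin (2 * real k * \<theta>))\<^sup>2
           * (sin (pi * real (M * P * y) / real N))\<^sup>2 / (sin (pi * real (P * y) / real N))\<^sup>2)
    \<and> ((P * y) mod N \<noteq> 0 \<and> (M * P * y) mod N = 0 \<longrightarrow> aqft_prob N s P M y = 0)"
proof -
  have N0: "N > 0" and M0: "0 < M" using assms(1,3) by auto
  note setting = assms(2) N0 assms(5)
  note off_zero = aqft_prob_nonzero_closed_form[OF setting _ assms(6) M0 assms(4),
      folded \<theta>_def k_def]
  have nonzero: "y \<noteq> 0" if "(P * y) mod N \<noteq> 0" using that by (metis mult_0_right mod_0)
  show ?thesis
  proof (intro conjI impI)
    assume "y = 0"
    thus "aqft_prob N s P M y = (cos (2 * real k * \<theta>))\<^sup>2"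
      using aqft_prob_at_zero[OF setting]
        grover_amplitude_combinations(1)[OF M0 assms(4), folded \<theta>_def k_def] by simp
  next
    assume "(P * y) mod N = 0 \<and> y \<noteq> 0"
    thus "aqft_prob N s P M y = (tan \<theta>)\<^sup>2 * (sin (2 * real k * \<theta>))\<^sup>2"
      using off_zero M0 by simp
  next
    assume "(P * y) mod N \<noteq> 0 \<and> (M * P * y) mod N \<noteq> 0"
    thus "aqft_prob N s P M y = 1 / (real M)\<^sup>2 * (tan \<theta>)\<^sup>2 * (sin (2 * real k * \<theta>))\<^sup>2
           * (sin (pi * real (M * P * y) / real N))\<^sup>2 / (sin (pi * real (P * y) / real N))\<^sup>2"
      using off_zero nonzero by simp
  next
    assume "(P * y) mod N \<noteq> 0 \<and> (M * P * y) mod N = 0"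
    thus "aqft_prob N s P M y = 0"
      using off_zero nonzero sin_pi_multiple_div[OF N0, of "M * P * y"] by simp
  qed
qed

end
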